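(* Let $\widetilde{A}=(\widetilde a_{ij})$ be a real symmetric $N\times N$ matrix with nonnegative entries and zero diagonal ($\widetilde a_{jj}=0$ for all $j$), let $\widetilde d_j=\sum_{k=1}^N \widetilde a_{jk}$ and $\widetilde\Delta=\operatorname{diag}(\widetilde d_1,\dots,\widetilde d_N)$. Fix a node $q$ such that $\widetilde d_k\neq \widetilde d_q$ for every $k\neq q$. Then for $\zeta$ in a neighbourhood of $0$ the matrix $\widetilde\Delta+\zeta\widetilde A$ has an eigenvalue $\xi_q(\zeta)$ that is analytic in $\zeta$ with $\xi_q(0)=\widetilde d_q$, and its Taylor expansion is $$\xi_q(\zeta)=\widetilde d_q+c_2(q)\zeta^2+c_3(q)\zeta^3+c_4(q)\zeta^4+O(\zeta^5)$$ (i.e. the coefficient of $\zeta$ vanishes), where $$c_2(q)=\sum_{k\neq q}\frac{\widetilde a_{kq}^2}{\widetilde d_q-\widetilde d_k},\qquad c_3(q)=\sum_{r\neq q}\frac{\widetilde a_{rq}}{\widetilde d_q-\widetilde d_r}\sum_{k\neq q}\frac{\widetilde a_{kq}\widetilde a_{kr}}{\widetilde d_q-\widetilde d_k},$$ $$c_4(q)=\sum_{r\neq q}\frac{\widetilde a_{rq}}{\widetilde d_q-\widetilde d_r}\sum_{l\neq q}\frac{\widetilde a_{rl}}{\widetilde d_q-\widetilde d_l}\sum_{k\neq q}\frac{\widetilde a_{kq}\widetilde a_{kl}}{\widetilde d_q-\widetilde d_k}-\sum_{r\neq q}\frac{\widetilde a_{rq}^2}{(\widetilde d_q-\widetilde d_r)^2}\sum_{k\neq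 q}\frac{\widetilde a_{kq}^2}{\widetilde d_q-\widetilde d_k},$$ all sums running over indices in $\{1,\dots,N\}$. In particular, for a simple unweighted graph with zero-one adjacency matrix $A$ and degrees $d_j$, $c_2(q)=\sum_{k\in\mathcal N_q}\frac{1}{d_q-d_k}$ and $c_3(q)=\sum_{r\in\mathcal N_q}\sum_{k\in\mathcal N_q\cap\mathcal N_r}\frac{1}{(d_q-d_r)(d_q-d_k)}$, where $\mathcal N_j$ is the set of neighbours of node $j$.
   Context: $\widetilde A$ is the (weighted) adjacency matrix of an undirected graph without self-loops, $\widetilde d_j$ the strength (weighted degree) of node $j$; the Laplacian is $\widetilde\Delta-\widetilde A$ (the case $\zeta=-1$). The hypothesis says the degree of node $q$ is unique, so $\widetilde d_q$ is a simple eigenvalue of $\widetilde\Delta$. *)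

theory Defs
  imports "HOL-Analysis.Analysis"
begin

definition strength :: "real^'n^'n \<Rightarrow> 'n \<Rightarrow> real" where
  "strength A j = (\<Sum>k\<in>UNIV. A $ j $ k)"

definition degmat :: "real^'n^'n \<Rightarrow> real^'n^'n" where
  "degmat A = (\<chi> i j. if i = j then strength A i else 0)"

definition is_eigenvalue :: "real^'n^'n \<Rightarrow> real \<Rightarrow> bool" where
  "is_eigenvalue M \<xi> \<longleftrightarrow> (\<exists>v. v \<noteq> 0 \<and> M *v v = \<xi> *\<^sub>R v)"

end

theory Submission
  imports Defs
begin

(* Rayleigh-Schroedinger perturbation theory for the simple eigenvalue d_q of diag(d) + z A.
   Write the eigenvector as v(z) = sum_n z^n v_n, normalised by v(z)_q = 1, and the eigenvalue
   as xi(z) = sum_n c_n z^n.  Comparing coefficients of z^n in (diag(d) + z A) v = xi v gives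
   c_0 = d_q, c_n = (A v_(n-1))_q, and for i ~= q
     (d_i - d_q) v_n(i) = sum_(m=1..n-1) c_m v_(n-m)(i) - (A v_(n-1))_i,
   which is solvable because d_q is simple.  With delta the gap min_(i~=q) |d_i - d_q| and R a
   bound on the absolute row sums of A, induction gives |v_n(i)| <= K^n / (n+1)^2 for
   K = 12 R / delta: the weight (n+1)^-2 survives the convolution because
   sum_m (m+1)^-2 (n-m+1)^-2 <= 8 / (n+2)^2.  Hence both series converge for |z| < 1/K, and the
   Cauchy product turns the coefficient identities into the eigenvalue equation. *)

lemma sum_inverse_squares_le: "(\<Sum>m\<le>n. 1 / real (Suc m) ^ 2) \<le> 2 - 1 / real (Suc n)"
proof (induction n)
  case (Suc n)
  have "1 / real (Suc (Suc n)) ^ 2 \<le> 1 / (real (Suc n) * real (Suc (Suc n)))"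
    by (intro divide_left_mono) (auto simp: power2_eq_square simp del: of_nat_Suc)
  also have "\<dots> = 1 / real (Suc n) - 1 / real (Suc (Suc n))"
    by (simp add: divide_simps del: of_nat_Suc)
  finally show ?case
    using Suc.IH by (simp del: of_nat_Suc)
qed simp

lemma inverse_square_convolution_le:
  "(\<Sum>m\<le>n. 1 / (real (Suc m) ^ 2 * real (Suc (n - m)) ^ 2)) \<le> 8 / real (Suc (Suc n)) ^ 2"
proof -
  have pointwise: "1 / (real (Suc m) ^ 2 * real (Suc (n - m)) ^ 2)
      \<le> 2 / real (Suc (Suc n)) ^ 2 * (1 / real (Suc m) ^ 2 + 1 / real (Suc (n - m)) ^ 2)"
    if "m \<le> n" for m
  proof -
    define a b where "a = real (Suc m)" and "b = real (Suc (n - m))"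
    have "a > 0" "b > 0" "real (Suc (Suc n)) = a + b"
      using that by (auto simp: a_def b_def)
    have "(a + b) ^ 2 \<le> 2 * (a ^ 2 + b ^ 2)"
      using sum_squares_ge_zero [of "a - b" 0] by (simp add: power2_eq_square algebra_simps)
    then have "(a + b) ^ 2 / ((a + b) ^ 2 * (a ^ 2 * b ^ 2))
        \<le> 2 * (a ^ 2 + b ^ 2) / ((a + b) ^ 2 * (a ^ 2 * b ^ 2))"
      using \<open>a > 0\<close> \<open>b > 0\<close> by (intro divide_right_mono) simp_all
    with \<open>a > 0\<close> \<open>b > 0\<close> show ?thesis
      unfolding \<open>real (Suc (Suc n)) = a + b\<close> a_def [symmetric] b_def [symmetric]
      by (simp add: divide_simps)
  qed
  have reflect: "(\<Sum>m\<le>n. 1 / real (Suc (n - m)) ^ 2) = (\<Sum>m\<le>n. 1 / real (Suc m) ^ 2)"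
    using sum.atLeastAtMost_rev [of "\<lambda>m. 1 / real (Suc m) ^ 2" 0 n] by (simp add: atLeast0AtMost)
  have "(\<Sum>m\<le>n. 1 / (real (Suc m) ^ 2 * real (Suc (n - m)) ^ 2))
      \<le> (\<Sum>m\<le>n. 2 / real (Suc (Suc n)) ^ 2 * (1 / real (Suc m) ^ 2 + 1 / real (Suc (n - m)) ^ 2))"
    by (rule sum_mono) (rule pointwise, simp)
  also have "\<dots> = 4 / real (Suc (Suc n)) ^ 2 * (\<Sum>m\<le>n. 1 / real (Suc m) ^ 2)"
    unfolding sum_distrib_left [symmetric] sum.distrib reflect by simp
  also have "\<dots> \<le> 4 / real (Suc (Suc n)) ^ 2 * 2"
  proof (intro mult_left_mono)
    show "(\<Sum>m\<le>n. 1 / real (Suc m) ^ 2) \<le> 2"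
      using sum_inverse_squares_le [of n] by (smt (verit) of_nat_0_le_iff divide_nonneg_nonneg)
  qed simp
  finally show ?thesis
    by simp
qed

lemma summable_norm_of_geometric_bound:
  fixes a :: "nat \<Rightarrow> real"
  assumes "\<And>n. \<bar>a n\<bar> \<le> C * K ^ n" and "K \<ge> 0" and "K * \<bar>z\<bar> < 1"
  shows "summable (\<lambda>n. norm (a n * z ^ n))"
proof (rule summable_comparison_test')
  show "summable (\<lambda>n. C * (K * \<bar>z\<bar>) ^ n)"
    using assms(2,3) by (intro summable_mult summable_geometric) simp
  show "norm (norm (a n * z ^ n)) \<le> C * (K * \<bar>z\<bar>) ^ n" for n
    using mult_right_mono [OF assms(1) abs_ge_zero [of "z ^ n"]]
    by (simp add: abs_mult power_abs power_mult_distrib mult.assoc)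
qed

lemma diff_divide_diff_swap: "(a - b) / (c - d) = (b - a) / (d - (c :: 'a::field))"
  by (metis minus_diff_eq minus_divide_divide)

lemma sum_zero_one_weights:
  fixes w f :: "'a \<Rightarrow> real"
  assumes "finite S" and "\<And>k. k \<in> S \<Longrightarrow> w k = 0 \<or> w k = 1" and "{k \<in> S. w k = 1} = T"
  shows "(\<Sum>k\<in>S. w k * f k) = (\<Sum>k\<in>T. f k)"
proof -
  have "(\<Sum>k\<in>S. w k * f k) = (\<Sum>k\<in>S. if w k = 1 then f k else 0)"
    using assms(2) by (intro sum.cong) auto
  also have "\<dots> = (\<Sum>k\<in>{k \<in> S. w k = 1}. f k)"
    using assms(1) by (simp add: sum.inter_filter)
  finally show ?thesis
    using assms(3) by simp
qed

lemma abs_matrix_vector_mult_le: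
  fixes A :: "real^'n^'m"
  assumes "(\<Sum>j\<in>UNIV. \<bar>A $ i $ j\<bar>) \<le> R" and "\<And>j. \<bar>x $ j\<bar> \<le> b"
  shows "\<bar>(A *v x) $ i\<bar> \<le> R * b"
proof -
  have "b \<ge> 0"
    by (rule order_trans [OF abs_ge_zero assms(2)])
  have "\<bar>(A *v x) $ i\<bar> \<le> (\<Sum>j\<in>UNIV. \<bar>A $ i $ j\<bar> * b)"
    unfolding matrix_vector_mult_def vec_lambda_beta
    by (rule order_trans [OF sum_abs sum_mono]) (simp add: abs_mult assms(2) mult_left_mono)
  also have "\<dots> \<le> R * b"
    using assms(1) \<open>b \<ge> 0\<close> by (simp add: sum_distrib_right [symmetric] mult_right_mono)
  finally show ?thesis .
qed

lemma matrix_vector_mult_nth_vanishing: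
  fixes A :: "'a::semiring_1^'n^'m"
  assumes "x $ q = 0"
  shows "(A *v x) $ i = (\<Sum>j\<in>{j. j \<noteq> q}. A $ i $ j * x $ j)"
proof -
  have "{j. j \<noteq> q} = UNIV - {q}"
    by auto
  then show ?thesis
    using assms by (simp add: matrix_vector_mult_def sum.remove [of UNIV q])
qed

definition diag_mat :: "('n \<Rightarrow> real) \<Rightarrow> real^'n^'n" where
  "diag_mat d = (\<chi> i j. if i = j then d i else 0)"

lemma degmat_eq_diag_mat: "degmat A = diag_mat (strength A)"
  by (simp add: degmat_def diag_mat_def)

lemma diag_mat_plus_scaleR_mult:
  "((diag_mat d + z *\<^sub>R A) *v v) $ i = d i * v $ i + z * (A *v v) $ i"
proof -
  have "((diag_mat d + z *\<^sub>R A) *v v) $ i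
      = (\<Sum>j\<in>UNIV. (if i = j then d i * v $ j else 0) + z * (A $ i $ j * v $ j))"
    by (auto simp: matrix_vector_mult_def diag_mat_def distrib_right mult.assoc intro!: sum.cong)
  then show ?thesis
    by (simp add: sum.distrib sum_distrib_left matrix_vector_mult_def)
qed

section \<open>The perturbation series\<close>

(* The factor (A *v pert_vec d A q m) $ q is pert_val d A q (Suc m), inlined for the recursion. *)
fun pert_vec :: "('n \<Rightarrow> real) \<Rightarrow> real^'n^'n \<Rightarrow> 'n \<Rightarrow> nat \<Rightarrow> real^'n" where
  "pert_vec d A q 0 = axis q 1"
| "pert_vec d A q (Suc n) = (\<chi> i. if i = q then 0 else
     ((\<Sum>m<n. (A *v pert_vec d A q m) $ q * pert_vec d A q (n - m) $ i)
       - (A *v pert_vec d A q n) $ i) / (d i - d q))"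

definition pert_val :: "('n \<Rightarrow> real) \<Rightarrow> real^'n^'n \<Rightarrow> 'n \<Rightarrow> nat \<Rightarrow> real" where
  "pert_val d A q n = (if n = 0 then d q else (A *v pert_vec d A q (n - 1)) $ q)"

declare pert_vec.simps(2) [simp del]

lemma pert_vec_at: "pert_vec d A q n $ q = (if n = 0 then 1 else 0)"
  by (cases n) (simp_all add: pert_vec.simps axis_def)

lemma pert_vec_Suc:
  "i \<noteq> q \<Longrightarrow> pert_vec d A q (Suc n) $ i =
     ((\<Sum>m<n. pert_val d A q (Suc m) * pert_vec d A q (n - m) $ i)
       - (A *v pert_vec d A q n) $ i) / (d i - d q)"
  by (simp add: pert_vec.simps pert_val_def)

lemma pert_val_Suc: "pert_val d A q (Suc n) = (A *v pert_vec d A q n) $ q"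
  by (simp add: pert_val_def)

text \<open>Coefficient of \<open>z ^ n\<close> in \<open>(diag_mat d + z A) v(z) = \<xi>(z) v(z)\<close>.\<close>
lemma pert_coeff_eq:
  assumes simple: "\<And>k. k \<noteq> q \<Longrightarrow> d k \<noteq> d q"
  shows "d i * pert_vec d A q n $ i + (if n = 0 then 0 else (A *v pert_vec d A q (n - 1)) $ i)
       = (\<Sum>m\<le>n. pert_val d A q m * pert_vec d A q (n - m) $ i)"
proof (cases "i = q")
  case True
  have "(\<Sum>m\<le>n. pert_val d A q m * pert_vec d A q (n - m) $ i)
      = (\<Sum>m\<le>n. if m = n then pert_val d A q m else 0)"
    by (rule sum.cong) (auto simp: True pert_vec_at)
  then show ?thesis
    by (simp add: True pert_vec_at pert_val_def)
next
  case False
  show ?thesis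
  proof (cases n)
    case (Suc k)
    have "(\<Sum>m\<le>n. pert_val d A q m * pert_vec d A q (n - m) $ i)
        = d q * pert_vec d A q (Suc k) $ i
          + (\<Sum>m<k. pert_val d A q (Suc m) * pert_vec d A q (k - m) $ i)"
      using False by (simp add: Suc sum.atMost_Suc_shift sum.atMost_shift pert_val_def axis_def)
    moreover have "d i - d q \<noteq> 0"
      using simple False by auto
    ultimately show ?thesis
      using False by (simp add: Suc pert_vec_Suc field_simps)
  qed (simp add: False axis_def)
qed

section \<open>Convergence\<close>

lemma pert_val_Suc_abs_le:
  assumes "\<And>j. (\<Sum>k\<in>UNIV. \<bar>A $ j $ k\<bar>) \<le> R" and "\<And>j. \<bar>pert_vec d A q n $ j\<bar> \<le> b"
  shows "\<bar>pert_val d A q (Suc n)\<bar> \<le> R * b"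
  unfolding pert_val_Suc by (rule abs_matrix_vector_mult_le [OF assms])

lemma pert_convolution_abs_le:
  assumes rows: "\<And>j. (\<Sum>k\<in>UNIV. \<bar>A $ j $ k\<bar>) \<le> R" and "K \<ge> 0"
    and IH: "\<And>m j. m \<le> k \<Longrightarrow> \<bar>pert_vec d A q m $ j\<bar> \<le> K ^ m / real (Suc m) ^ 2"
  shows "\<bar>\<Sum>m<k. pert_val d A q (Suc m) * pert_vec d A q (k - m) $ i\<bar>
    \<le> 8 * R * K ^ k / real (Suc (Suc k)) ^ 2"
proof -
  have "R \<ge> 0"
    using rows [of i] by (smt (verit) sum_nonneg abs_ge_zero)
  let ?w = "\<lambda>m. 1 / (real (Suc m) ^ 2 * real (Suc (k - m)) ^ 2)"
  have summand: "\<bar>pert_val d A q (Suc m) * pert_vec d A q (k - m) $ i\<bar> \<le> R * K ^ k * ?w m"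
    if "m \<le> k" for m
  proof -
    have "\<bar>pert_val d A q (Suc m)\<bar> \<le> R * (K ^ m / real (Suc m) ^ 2)"
      using that by (intro pert_val_Suc_abs_le rows IH)
    moreover have "\<bar>pert_vec d A q (k - m) $ i\<bar> \<le> K ^ (k - m) / real (Suc (k - m)) ^ 2"
      by (rule IH) simp
    ultimately have "\<bar>pert_val d A q (Suc m) * pert_vec d A q (k - m) $ i\<bar>
        \<le> R * (K ^ m / real (Suc m) ^ 2) * (K ^ (k - m) / real (Suc (k - m)) ^ 2)"
      unfolding abs_mult using \<open>R \<ge> 0\<close> \<open>K \<ge> 0\<close> by (intro mult_mono) auto
    also have "\<dots> = R * (K ^ m * K ^ (k - m)) * ?w m"
      by simp
    also have "K ^ m * K ^ (k - m) = K ^ k"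
      using that by (metis le_add_diff_inverse power_add)
    finally show ?thesis .
  qed
  have "\<bar>\<Sum>m<k. pert_val d A q (Suc m) * pert_vec d A q (k - m) $ i\<bar>
      \<le> (\<Sum>m<k. R * K ^ k * ?w m)"
    using summand by (intro order_trans [OF sum_abs sum_mono]) simp
  also have "\<dots> \<le> (\<Sum>m\<le>k. R * K ^ k * ?w m)"
    using \<open>R \<ge> 0\<close> \<open>K \<ge> 0\<close> by (intro sum_mono2) auto
  also have "\<dots> \<le> R * K ^ k * (8 / real (Suc (Suc k)) ^ 2)"
    unfolding sum_distrib_left [symmetric] using \<open>R \<ge> 0\<close> \<open>K \<ge> 0\<close>
    by (intro mult_left_mono inverse_square_convolution_le) simp
  finally show ?thesis
    by (simp add: mult_ac)
qed

lemma pert_vec_Suc_abs_le: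
  assumes gap: "\<delta> > 0" "\<And>j. j \<noteq> q \<Longrightarrow> \<delta> \<le> \<bar>d j - d q\<bar>"
    and rows: "\<And>j. (\<Sum>k\<in>UNIV. \<bar>A $ j $ k\<bar>) \<le> R"
    and K: "12 * R / \<delta> \<le> K"
    and IH: "\<And>m j. m \<le> k \<Longrightarrow> \<bar>pert_vec d A q m $ j\<bar> \<le> K ^ m / real (Suc m) ^ 2"
  shows "\<bar>pert_vec d A q (Suc k) $ i\<bar> \<le> K ^ Suc k / real (Suc (Suc k)) ^ 2"
proof -
  let ?N = "real (Suc (Suc k))"
  have "R \<ge> 0"
    using rows [of i] by (smt (verit) sum_nonneg abs_ge_zero)
  then have "K \<ge> 0"
    using K gap(1) by (smt (verit) divide_nonneg_pos)
  have "\<bar>(A *v pert_vec d A q k) $ i\<bar> \<le> R * (K ^ k / real (Suc k) ^ 2)"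
    by (intro abs_matrix_vector_mult_le rows IH) simp
  also have "\<dots> \<le> R * (K ^ k * (4 / ?N ^ 2))"
  proof -
    have "?N ^ 2 \<le> 4 * real (Suc k) ^ 2"
      by (simp add: power2_eq_square algebra_simps)
    then have "1 / real (Suc k) ^ 2 \<le> 4 / ?N ^ 2"
      by (simp add: field_simps del: of_nat_Suc)
    then show ?thesis
      using \<open>R \<ge> 0\<close> \<open>K \<ge> 0\<close> by (simp add: mult_left_mono divide_inverse)
  qed
  finally have linear: "\<bar>(A *v pert_vec d A q k) $ i\<bar> \<le> 4 * R * K ^ k / ?N ^ 2"
    by (simp add: mult_ac)
  show ?thesis
  proof (cases "i = q")
    case False
    have "\<bar>pert_vec d A q (Suc k) $ i\<bar>
        \<le> (\<bar>\<Sum>m<k. pert_val d A q (Suc m) * pert_vec d A q (k - m) $ i\<bar>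
            + \<bar>(A *v pert_vec d A q k) $ i\<bar>) / \<delta>"
      unfolding pert_vec_Suc [OF False] abs_divide
      using gap False by (intro frac_le) auto
    also have "\<dots> \<le> (8 * R * K ^ k / ?N ^ 2 + 4 * R * K ^ k / ?N ^ 2) / \<delta>"
      using pert_convolution_abs_le [where k = k, OF rows \<open>K \<ge> 0\<close> IH] linear gap(1)
      by (intro divide_right_mono add_mono) auto
    also have "\<dots> = (12 * R / \<delta>) * (K ^ k / ?N ^ 2)"
      by (simp add: add_divide_distrib [symmetric] mult_ac)
    also have "\<dots> \<le> K * (K ^ k / ?N ^ 2)"
      using K \<open>K \<ge> 0\<close> by (intro mult_right_mono) simp_all
    finally show ?thesis
      by simp
  qed (simp add: pert_vec_at \<open>K \<ge> 0\<close>)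
qed

lemma pert_vec_abs_le:
  assumes gap: "\<delta> > 0" "\<And>j. j \<noteq> q \<Longrightarrow> \<delta> \<le> \<bar>d j - d q\<bar>"
    and rows: "\<And>j. (\<Sum>k\<in>UNIV. \<bar>A $ j $ k\<bar>) \<le> R"
    and K: "12 * R / \<delta> \<le> K"
  shows "\<bar>pert_vec d A q n $ i\<bar> \<le> K ^ n / real (Suc n) ^ 2"
proof (induction n arbitrary: i rule: less_induct)
  case (less n)
  show ?case
  proof (cases n)
    case (Suc k)
    have "\<bar>pert_vec d A q (Suc k) $ i\<bar> \<le> K ^ Suc k / real (Suc (Suc k)) ^ 2"
      using gap rows K less.IH Suc by (intro pert_vec_Suc_abs_le [where \<delta> = \<delta> and R = R]) auto
    then show ?thesis
      unfolding Suc .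
  qed (simp add: axis_def)
qed

lemma pert_series_eigenvector:
  assumes simple: "\<And>k. k \<noteq> q \<Longrightarrow> d k \<noteq> d q"
    and val: "summable (\<lambda>n. norm (pert_val d A q n * z ^ n))"
    and vec: "\<And>i. summable (\<lambda>n. norm (pert_vec d A q n $ i * z ^ n))"
  defines "v \<equiv> \<chi> i. \<Sum>n. pert_vec d A q n $ i * z ^ n"
  shows "(diag_mat d + z *\<^sub>R A) *v v = (\<Sum>n. pert_val d A q n * z ^ n) *\<^sub>R v"
proof (rule vec_eq_iff [THEN iffD2], intro allI)
  fix i
  have v_sums: "(\<lambda>n. pert_vec d A q n $ j * z ^ n) sums v $ j" for j
    unfolding v_def using summable_norm_cancel [OF vec] by (simp add: summable_sums)
  have "(\<lambda>n. \<Sum>j\<in>UNIV. A $ i $ j * (pert_vec d A q n $ j * z ^ n)) sums (A *v v) $ i"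
    unfolding matrix_vector_mult_def vec_lambda_beta by (intro sums_sum sums_mult v_sums)
  moreover have "(\<lambda>n. \<Sum>j\<in>UNIV. A $ i $ j * (pert_vec d A q n $ j * z ^ n))
      = (\<lambda>n. (A *v pert_vec d A q n) $ i * z ^ n)"
    by (simp add: matrix_vector_mult_def sum_distrib_left mult_ac)
  ultimately have "(\<lambda>n. z * ((A *v pert_vec d A q n) $ i * z ^ n)) sums (z * (A *v v) $ i)"
    by (intro sums_mult) simp
  moreover define shifted where
    "shifted n = (if n = 0 then 0 else (A *v pert_vec d A q (n - 1)) $ i) * z ^ n" for n
  ultimately have "(\<lambda>n. shifted (Suc n)) sums (z * (A *v v) $ i)"
    by (simp add: mult_ac)
  then have "shifted sums (z * (A *v v) $ i + shifted 0)"
    by (rule sums_Suc_iff [THEN iffD1])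
  then have "shifted sums (z * (A *v v) $ i)"
    by (simp add: shifted_def)
  from sums_add [OF sums_mult [OF v_sums [of i], of "d i"] this]
  have lhs: "(\<lambda>n. (d i * pert_vec d A q n $ i
        + (if n = 0 then 0 else (A *v pert_vec d A q (n - 1)) $ i)) * z ^ n)
      sums ((diag_mat d + z *\<^sub>R A) *v v) $ i"
    by (simp add: diag_mat_plus_scaleR_mult distrib_right mult.assoc shifted_def)
  have "(\<lambda>n. \<Sum>m\<le>n. (pert_val d A q m * z ^ m) * (pert_vec d A q (n - m) $ i * z ^ (n - m)))
      sums ((\<Sum>n. pert_val d A q n * z ^ n) * v $ i)"
    unfolding v_def vec_lambda_beta by (rule Cauchy_product_sums [OF val vec])
  moreover have "(\<Sum>m\<le>n. (pert_val d A q m * z ^ m) * (pert_vec d A q (n - m) $ i * z ^ (n - m)))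
      = (d i * pert_vec d A q n $ i
          + (if n = 0 then 0 else (A *v pert_vec d A q (n - 1)) $ i)) * z ^ n" for n
  proof -
    have "z ^ m * z ^ (n - m) = z ^ n" if "m \<le> n" for m
      using that by (metis le_add_diff_inverse power_add)
    then have "(\<Sum>m\<le>n. (pert_val d A q m * z ^ m) * (pert_vec d A q (n - m) $ i * z ^ (n - m)))
        = (\<Sum>m\<le>n. pert_val d A q m * pert_vec d A q (n - m) $ i) * z ^ n"
      unfolding sum_distrib_right by (intro sum.cong) (auto simp: mult_ac)
    then show ?thesis
      using pert_coeff_eq [where d = d and q = q and A = A, OF simple] by simp
  qed
  ultimately show "((diag_mat d + z *\<^sub>R A) *v v) $ i = ((\<Sum>n. pert_val d A q n * z ^ n) *\<^sub>R v) $ i"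
    using sums_unique2 [OF lhs] by simp
qed

lemma pert_coeffs_geometric_bound:
  fixes d :: "'n::finite \<Rightarrow> real"
  assumes simple: "\<And>k. k \<noteq> q \<Longrightarrow> d k \<noteq> d q"
  obtains K C where "K > 0" and "\<And>n j. \<bar>pert_vec d A q n $ j\<bar> \<le> K ^ n"
    and "\<And>n. \<bar>pert_val d A q n\<bar> \<le> C * K ^ n"
proof -
  \<comment> \<open>Inserting 1 keeps the minimum defined when \<open>q\<close> is the only index.\<close>
  define \<delta> where "\<delta> = Min (insert 1 ((\<lambda>j. \<bar>d j - d q\<bar>) ` {j. j \<noteq> q}))"
  have gap: "\<delta> > 0" "\<And>j. j \<noteq> q \<Longrightarrow> \<delta> \<le> \<bar>d j - d q\<bar>"
    unfolding \<delta>_def using simple by (subst Min_gr_iff; force) (intro Min_le; auto)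
  define R where "R = (\<Sum>j\<in>UNIV. \<Sum>k\<in>UNIV. \<bar>A $ j $ k\<bar>)"
  have rows: "(\<Sum>k\<in>UNIV. \<bar>A $ j $ k\<bar>) \<le> R" for j
    unfolding R_def by (rule member_le_sum) (auto intro: sum_nonneg)
  moreover have "0 \<le> (\<Sum>k\<in>UNIV. \<bar>A $ q $ k\<bar>)"
    by (simp add: sum_nonneg)
  ultimately have "R \<ge> 0"
    by (meson order_trans)
  define K where "K = 12 * R / \<delta> + 1"
  have K: "12 * R / \<delta> \<le> K" and "K \<ge> 1"
    using \<open>R \<ge> 0\<close> gap(1) by (simp_all add: K_def)
  have vec_le: "\<bar>pert_vec d A q n $ j\<bar> \<le> K ^ n" for n j
  proof -
    have "\<bar>pert_vec d A q n $ j\<bar> \<le> K ^ n / real (Suc n) ^ 2"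
      by (rule pert_vec_abs_le [where d = d and q = q and A = A, OF gap rows K])
    also have "\<dots> \<le> K ^ n"
      using \<open>K \<ge> 1\<close> by (simp add: divide_le_eq)
    finally show ?thesis .
  qed
  have "\<bar>pert_val d A q n\<bar> \<le> (\<bar>d q\<bar> + R) * K ^ n" for n
  proof (cases n)
    case (Suc m)
    have "\<bar>pert_val d A q n\<bar> \<le> R * K ^ m"
      unfolding Suc using rows vec_le by (rule pert_val_Suc_abs_le)
    also have "\<dots> \<le> (\<bar>d q\<bar> + R) * K ^ n"
      unfolding Suc using \<open>R \<ge> 0\<close> \<open>K \<ge> 1\<close> by (intro mult_mono power_increasing) auto
    finally show ?thesis .
  qed (simp add: pert_val_def \<open>R \<ge> 0\<close>)
  moreover have "K > 0"
    using \<open>K \<ge> 1\<close> by simp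
  ultimately show ?thesis
    using vec_le that by blast
qed

lemma pert_series_is_eigenvalue:
  assumes simple: "\<And>k. k \<noteq> q \<Longrightarrow> d k \<noteq> d q"
    and val: "summable (\<lambda>n. norm (pert_val d A q n * z ^ n))"
    and vec: "\<And>i. summable (\<lambda>n. norm (pert_vec d A q n $ i * z ^ n))"
  shows "is_eigenvalue (diag_mat d + z *\<^sub>R A) (\<Sum>n. pert_val d A q n * z ^ n)"
proof -
  define v where "v = (\<chi> i. \<Sum>n. pert_vec d A q n $ i * z ^ n)"
  have "(\<lambda>n. pert_vec d A q n $ q * z ^ n) = (\<lambda>n. if n = 0 then 1 else 0)"
    by (simp add: pert_vec_at fun_eq_iff)
  then have "v $ q = 1"
    using sums_single [of 0 "\<lambda>_. 1 :: real"] by (simp add: v_def sums_iff)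
  then have "v \<noteq> 0"
    by auto
  moreover have "(diag_mat d + z *\<^sub>R A) *v v = (\<Sum>n. pert_val d A q n * z ^ n) *\<^sub>R v"
    unfolding v_def using simple val vec by (rule pert_series_eigenvector)
  ultimately show ?thesis
    unfolding is_eigenvalue_def by blast
qed

lemma pert_val_series_eigenvalue:
  fixes d :: "'n::finite \<Rightarrow> real"
  assumes simple: "\<And>k. k \<noteq> q \<Longrightarrow> d k \<noteq> d q"
  shows "\<exists>\<epsilon>>0. \<forall>z. \<bar>z\<bar> < \<epsilon> \<longrightarrow> summable (\<lambda>n. pert_val d A q n * z ^ n) \<and>
           is_eigenvalue (diag_mat d + z *\<^sub>R A) (\<Sum>n. pert_val d A q n * z ^ n)"
proof -
  obtain K C where "K > 0" and vec_le: "\<And>n j. \<bar>pert_vec d A q n $ j\<bar> \<le> K ^ n"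
    and val_le: "\<And>n. \<bar>pert_val d A q n\<bar> \<le> C * K ^ n"
    using pert_coeffs_geometric_bound [where d = d and q = q and A = A, OF simple] by blast
  have "summable (\<lambda>n. pert_val d A q n * z ^ n) \<and>
      is_eigenvalue (diag_mat d + z *\<^sub>R A) (\<Sum>n. pert_val d A q n * z ^ n)" if "\<bar>z\<bar> < 1 / K" for z
  proof -
    have "K * \<bar>z\<bar> < 1"
      using that \<open>K > 0\<close> by (simp add: field_simps)
    then have val: "summable (\<lambda>n. norm (pert_val d A q n * z ^ n))"
      using \<open>K > 0\<close> by (intro summable_norm_of_geometric_bound [OF val_le]) simp_all
    have vec: "summable (\<lambda>n. norm (pert_vec d A q n $ j * z ^ n))" for j
      using \<open>K > 0\<close> \<open>K * \<bar>z\<bar> < 1\<close> vec_le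
      by (intro summable_norm_of_geometric_bound [where C = 1]) simp_all
    show ?thesis
      using summable_norm_cancel [OF val]
        pert_series_is_eigenvalue [where d = d and q = q and A = A, OF simple val vec]
      by blast
  qed
  moreover have "1 / K > 0"
    using \<open>K > 0\<close> by simp
  ultimately show ?thesis
    by blast
qed

section \<open>Low-order coefficients\<close>

context
  fixes d :: "'n::finite \<Rightarrow> real" and A :: "real^'n^'n" and q :: 'n
  assumes sym: "\<And>i j. A $ i $ j = A $ j $ i"
    and loopless: "A $ q $ q = 0"
    and simple: "\<And>k. k \<noteq> q \<Longrightarrow> d k \<noteq> d q"
begin

lemma pert_val_1: "pert_val d A q 1 = 0"
  using loopless by (simp add: pert_val_def matrix_vector_mult_basis column_def)

lemma pert_vec_1: "i \<noteq> q \<Longrightarrow> pert_vec d A q 1 $ i = A $ i $ q / (d q - d i)"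
  using pert_vec_Suc [of i q d A 0]
  by (simp add: matrix_vector_mult_basis column_def) (metis minus_diff_eq minus_divide_right)

lemma pert_val_2: "pert_val d A q 2 = (\<Sum>k\<in>{k. k \<noteq> q}. (A $ k $ q)\<^sup>2 / (d q - d k))"
proof -
  have "pert_val d A q 2 = (\<Sum>k\<in>{k. k \<noteq> q}. A $ q $ k * pert_vec d A q 1 $ k)"
    using pert_val_Suc [of d A q 1]
    by (simp add: numeral_2_eq_2 matrix_vector_mult_nth_vanishing pert_vec_at)
  also have "\<dots> = (\<Sum>k\<in>{k. k \<noteq> q}. (A $ k $ q)\<^sup>2 / (d q - d k))"
    by (rule sum.cong) (simp_all add: pert_vec_1 [unfolded One_nat_def] sym [of q] power2_eq_square)
  finally show ?thesis .
qed

lemma pert_vec_2: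
  assumes "i \<noteq> q"
  shows "pert_vec d A q 2 $ i = (\<Sum>k\<in>{k. k \<noteq> q}. A $ k $ q * A $ k $ i / (d q - d k)) / (d q - d i)"
proof -
  have "(A *v pert_vec d A q 1) $ i = (\<Sum>k\<in>{k. k \<noteq> q}. A $ i $ k * pert_vec d A q 1 $ k)"
    by (simp add: matrix_vector_mult_nth_vanishing pert_vec_at)
  also have "\<dots> = (\<Sum>k\<in>{k. k \<noteq> q}. A $ k $ q * A $ k $ i / (d q - d k))"
    by (rule sum.cong) (simp_all add: pert_vec_1 [unfolded One_nat_def] sym [of i])
  moreover have "pert_vec d A q 2 $ i = (0 - (A *v pert_vec d A q 1) $ i) / (d i - d q)"
    using pert_vec_Suc [OF assms, of d A 1] pert_val_1 by (simp add: numeral_2_eq_2)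
  ultimately show ?thesis
    using diff_divide_diff_swap [of 0 "(A *v pert_vec d A q 1) $ i" "d i" "d q"] by simp
qed

lemma pert_val_3:
  "pert_val d A q 3 = (\<Sum>r\<in>{r. r \<noteq> q}. A $ r $ q / (d q - d r) *
     (\<Sum>k\<in>{k. k \<noteq> q}. A $ k $ q * A $ k $ r / (d q - d k)))"
proof -
  have "pert_val d A q 3 = (\<Sum>r\<in>{r. r \<noteq> q}. A $ q $ r * pert_vec d A q 2 $ r)"
    using pert_val_Suc [of d A q 2] by (simp add: matrix_vector_mult_nth_vanishing pert_vec_at)
  also have "\<dots> = (\<Sum>r\<in>{r. r \<noteq> q}. A $ r $ q / (d q - d r) *
     (\<Sum>k\<in>{k. k \<noteq> q}. A $ k $ q * A $ k $ r / (d q - d k)))"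
    by (rule sum.cong) (simp_all add: pert_vec_2 sym [of q])
  finally show ?thesis .
qed

lemma pert_vec_3:
  assumes "i \<noteq> q"
  shows "pert_vec d A q 3 $ i = ((\<Sum>l\<in>{l. l \<noteq> q}. A $ i $ l * pert_vec d A q 2 $ l)
           - pert_val d A q 2 * A $ i $ q / (d q - d i)) / (d q - d i)"
proof -
  have "(\<Sum>m<2. pert_val d A q (Suc m) * pert_vec d A q (2 - m) $ i)
      = pert_val d A q 1 * pert_vec d A q 2 $ i + pert_val d A q 2 * pert_vec d A q 1 $ i"
    by (simp add: numeral_2_eq_2)
  moreover have "(A *v pert_vec d A q 2) $ i = (\<Sum>l\<in>{l. l \<noteq> q}. A $ i $ l * pert_vec d A q 2 $ l)"
    by (simp add: matrix_vector_mult_nth_vanishing pert_vec_at)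
  ultimately have "pert_vec d A q 3 $ i = (pert_val d A q 2 * (A $ i $ q / (d q - d i))
      - (\<Sum>l\<in>{l. l \<noteq> q}. A $ i $ l * pert_vec d A q 2 $ l)) / (d i - d q)"
    using pert_vec_Suc [OF assms, of d A 2] pert_val_1 pert_vec_1 [OF assms] by simp
  then show ?thesis
    by (simp only: diff_divide_diff_swap times_divide_eq_right)
qed

lemma pert_val_4:
  "pert_val d A q 4 = (\<Sum>r\<in>{r. r \<noteq> q}. A $ r $ q / (d q - d r) *
       (\<Sum>l\<in>{l. l \<noteq> q}. A $ r $ l / (d q - d l) *
          (\<Sum>k\<in>{k. k \<noteq> q}. A $ k $ q * A $ k $ l / (d q - d k))))
     - (\<Sum>r\<in>{r. r \<noteq> q}. (A $ r $ q)\<^sup>2 / (d q - d r)\<^sup>2) *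
       (\<Sum>k\<in>{k. k \<noteq> q}. (A $ k $ q)\<^sup>2 / (d q - d k))"
proof -
  have inner: "(\<Sum>l\<in>{l. l \<noteq> q}. A $ r $ l * pert_vec d A q 2 $ l)
      = (\<Sum>l\<in>{l. l \<noteq> q}. A $ r $ l / (d q - d l) *
          (\<Sum>k\<in>{k. k \<noteq> q}. A $ k $ q * A $ k $ l / (d q - d k)))" for r
    by (rule sum.cong) (simp_all add: pert_vec_2)
  have "pert_val d A q 4 = (\<Sum>r\<in>{r. r \<noteq> q}. A $ q $ r * pert_vec d A q 3 $ r)"
    using pert_val_Suc [of d A q 3] by (simp add: matrix_vector_mult_nth_vanishing pert_vec_at)
  also have "\<dots> = (\<Sum>r\<in>{r. r \<noteq> q}. A $ r $ q / (d q - d r) *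
       (\<Sum>l\<in>{l. l \<noteq> q}. A $ r $ l / (d q - d l) *
          (\<Sum>k\<in>{k. k \<noteq> q}. A $ k $ q * A $ k $ l / (d q - d k)))
      - (A $ r $ q)\<^sup>2 / (d q - d r)\<^sup>2 * pert_val d A q 2)"
    by (rule sum.cong) (simp_all add: pert_vec_3 inner sym [of q] power2_eq_square
        diff_divide_distrib right_diff_distrib)
  finally show ?thesis
    by (simp add: sum_subtractf sum_distrib_right pert_val_2)
qed

end

context
  fixes d :: "'n::finite \<Rightarrow> real" and A :: "real^'n^'n" and q :: 'n
  assumes sym: "\<And>i j. A $ i $ j = A $ j $ i"
    and zero_one: "\<And>i j. A $ i $ j = 0 \<or> A $ i $ j = 1"
    and loopless: "A $ q $ q = 0"
begin

lemma second_order_zero_one: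
  "(\<Sum>k\<in>{k. k \<noteq> q}. (A $ k $ q)\<^sup>2 / (d q - d k)) = (\<Sum>k\<in>{k. A $ q $ k = 1}. 1 / (d q - d k))"
proof -
  have "(\<Sum>k\<in>{k. k \<noteq> q}. (A $ k $ q)\<^sup>2 / (d q - d k))
      = (\<Sum>k\<in>{k. k \<noteq> q}. A $ q $ k * (1 / (d q - d k)))"
    using zero_one by (intro sum.cong) (auto simp: sym [of _ q] power2_eq_square)
  also have "\<dots> = (\<Sum>k\<in>{k. A $ q $ k = 1}. 1 / (d q - d k))"
    using zero_one loopless by (intro sum_zero_one_weights) auto
  finally show ?thesis .
qed

lemma third_order_zero_one:
  "(\<Sum>r\<in>{r. r \<noteq> q}. A $ r $ q / (d q - d r) *
       (\<Sum>k\<in>{k. k \<noteq> q}. A $ k $ q * A $ k $ r / (d q - d k)))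
   = (\<Sum>r\<in>{r. A $ q $ r = 1}. \<Sum>k\<in>{k. A $ q $ k = 1 \<and> A $ r $ k = 1}.
       1 / ((d q - d r) * (d q - d k)))"
proof -
  have inner: "(\<Sum>k\<in>{k. k \<noteq> q}. A $ k $ q * A $ k $ r / (d q - d k))
      = (\<Sum>k\<in>{k. A $ q $ k = 1 \<and> A $ r $ k = 1}. 1 / (d q - d k))" for r
  proof -
    have both: "A $ q $ k * A $ r $ k = 1 \<longleftrightarrow> A $ q $ k = 1 \<and> A $ r $ k = 1" for k
      using zero_one [of q k] zero_one [of r k] by auto
    have "(\<Sum>k\<in>{k. k \<noteq> q}. A $ k $ q * A $ k $ r / (d q - d k))
        = (\<Sum>k\<in>{k. k \<noteq> q}. (A $ q $ k * A $ r $ k) * (1 / (d q - d k)))"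
      by (intro sum.cong) (simp_all add: sym [of _ q] sym [of _ r])
    also have "\<dots> = (\<Sum>k\<in>{k. A $ q $ k = 1 \<and> A $ r $ k = 1}. 1 / (d q - d k))"
      using zero_one loopless by (intro sum_zero_one_weights) (auto simp: both)
    finally show ?thesis .
  qed
  have "(\<Sum>r\<in>{r. r \<noteq> q}. A $ r $ q / (d q - d r) *
       (\<Sum>k\<in>{k. k \<noteq> q}. A $ k $ q * A $ k $ r / (d q - d k)))
      = (\<Sum>r\<in>{r. r \<noteq> q}. A $ q $ r *
          (\<Sum>k\<in>{k. A $ q $ k = 1 \<and> A $ r $ k = 1}. 1 / ((d q - d r) * (d q - d k))))"
    unfolding inner by (intro sum.cong) (simp_all add: sym [of _ q] sum_distrib_left)
  also have "\<dots> = (\<Sum>r\<in>{r. A $ q $ r = 1}. \<Sum>k\<in>{k. A $ q $ k = 1 \<and> A $ r $ k = 1}.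
       1 / ((d q - d r) * (d q - d k)))"
    using zero_one loopless by (intro sum_zero_one_weights) auto
  finally show ?thesis .
qed

end

theorem mainTheorem1:
  fixes A :: "real^'n^'n" and q :: 'n
  assumes sym: "\<And>i j. A $ i $ j = A $ j $ i"
    and nonneg: "\<And>i j. A $ i $ j \<ge> 0"
    and diag0: "\<And>j. A $ j $ j = 0"
    and simple: "\<And>k. k \<noteq> q \<Longrightarrow> strength A k \<noteq> strength A q"
  defines "d \<equiv> strength A"
  shows "\<exists>\<epsilon>>0. \<exists>\<xi>::real \<Rightarrow> real. \<exists>c::nat \<Rightarrow> real.
     (\<forall>\<zeta>. \<bar>\<zeta>\<bar> < \<epsilon> \<longrightarrow> (\<lambda>n. c n * \<zeta> ^ n) sums \<xi> \<zeta>) \<and>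
     (\<forall>\<zeta>. \<bar>\<zeta>\<bar> < \<epsilon> \<longrightarrow> is_eigenvalue (degmat A + \<zeta> *\<^sub>R A) (\<xi> \<zeta>)) \<and>
     \<xi> 0 = d q \<and>
     c 0 = d q \<and> c 1 = 0 \<and>
     c 2 = (\<Sum>k\<in>{k. k \<noteq> q}. (A $ k $ q)^2 / (d q - d k)) \<and>
     c 3 = (\<Sum>r\<in>{r. r \<noteq> q}. A $ r $ q / (d q - d r) *
              (\<Sum>k\<in>{k. k \<noteq> q}. A $ k $ q * A $ k $ r / (d q - d k))) \<and>
     c 4 = (\<Sum>r\<in>{r. r \<noteq> q}. A $ r $ q / (d q - d r) *
              (\<Sum>l\<in>{l. l \<noteq> q}. A $ r $ l / (d q - d l) *
                 (\<Sum>k\<in>{k. k \<noteq> q}. A $ k $ q * A $ k $ l / (d q - d k))))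
           - (\<Sum>r\<in>{r. r \<noteq> q}. (A $ r $ q)^2 / (d q - d r)^2) *
             (\<Sum>k\<in>{k. k \<noteq> q}. (A $ k $ q)^2 / (d q - d k)) \<and>
     ((\<forall>i j. A $ i $ j = 0 \<or> A $ i $ j = 1) \<longrightarrow>
        c 2 = (\<Sum>k\<in>{k. A $ q $ k = 1}. 1 / (d q - d k)) \<and>
        c 3 = (\<Sum>r\<in>{r. A $ q $ r = 1}. \<Sum>k\<in>{k. A $ q $ k = 1 \<and> A $ r $ k = 1}.
                 1 / ((d q - d r) * (d q - d k))))"
proof -
  have simple_d: "\<And>k. k \<noteq> q \<Longrightarrow> d k \<noteq> d q"
    using simple by (simp add: d_def)
  obtain \<epsilon> :: real where "\<epsilon> > 0" and series: "\<And>z. \<bar>z\<bar> < \<epsilon> \<Longrightarrow>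
      summable (\<lambda>n. pert_val d A q n * z ^ n) \<and>
      is_eigenvalue (diag_mat d + z *\<^sub>R A) (\<Sum>n. pert_val d A q n * z ^ n)"
    using pert_val_series_eigenvalue [where d = d and q = q and A = A, OF simple_d] by blast
  define c where "c = pert_val d A q"
  define \<xi> where "\<xi> z = (\<Sum>n. c n * z ^ n)" for z
  have sums: "\<forall>\<zeta>. \<bar>\<zeta>\<bar> < \<epsilon> \<longrightarrow> (\<lambda>n. c n * \<zeta> ^ n) sums \<xi> \<zeta>"
    using series by (simp add: c_def \<xi>_def summable_sums)
  have eigen: "\<forall>\<zeta>. \<bar>\<zeta>\<bar> < \<epsilon> \<longrightarrow> is_eigenvalue (degmat A + \<zeta> *\<^sub>R A) (\<xi> \<zeta>)"
    using series by (simp add: c_def \<xi>_def d_def degmat_eq_diag_mat)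
  have at_zero: "\<xi> 0 = d q" "c 0 = d q"
    by (simp_all add: \<xi>_def c_def pert_val_def)
  note low_order = pert_val_1 pert_val_2 pert_val_3 pert_val_4
  note zero_one = second_order_zero_one third_order_zero_one
  show ?thesis
    using \<open>\<epsilon> > 0\<close> sums eigen at_zero
      low_order [where d = d and A = A and q = q, OF sym diag0 simple_d]
      zero_one [where d = d and A = A and q = q, OF sym _ diag0]
    by (intro exI [of _ \<epsilon>] exI [of _ \<xi>] exI [of _ c] conjI impI) (simp_all add: c_def)
qed

end
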